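(* Let $G=(V,E)$ be a simple graph with $n$ vertices, $m$ edges, maximum degree $\Delta$ and arboricity $\alpha$, and let $\frac{1}{\alpha}\leq\varepsilon<1$. Procedure Arboricity Edge-Coloring with parameter $h=\max\{\lfloor\log(\varepsilon\alpha/3)\rfloor,0\}$ computes a proper edge-coloring of $G$ using at most $\Delta+\varepsilon\alpha$ colors in $O\left(\frac{m\log n}{\varepsilon^{7}}\right)$ deterministic time. Its randomized version requires $O\left(\frac{m\log n}{\varepsilon}\right)$ expected time.
   Context: Logarithms are base 2. The arboricity of $G$ is $\alpha(G)=\max_{S\subseteq V,|S|\ge2}\lceil |E(G[S])|/(|S|-1)\rceil$. A proper $k$-edge-coloring is a map $\varphi:E\to\{1,\dots,k\}$ assigning distinct colors to distinct edges sharing an endpoint. An orientation $\mu$ assigns a direction to each edge; $\mathrm{indeg}(v)$, $\mathrm{outdeg}(v)$ are the in/out-degrees. An oriented degree-splitting of $(G,\mu)$ with discrepancy $\kappa$ is a partition $(E_1,E_2)$ of $E$ such that for every vertex $v$, the numbers of incoming edges of $v$ in $E_1$ and in $E_2$ differ by at most $\kappa$, and the numbers of outgoing edges of $v$ in $E_1$ and in $E_2$ differ by at most $\kappa$. Procedure Forests-Decomposition Orientation$(G)$: starting from $\mathcal A=V$, repeatedly pick $v\in\mathcal A$ of minimum degree in $G[\mathcal A]$, orient every edge from $v$ to its neighbours in $\mathcal A$, and remove $v$ from $\mathcal A$, until $\mathcal A=\emptyset$. Procedure Oriented Edge-Coloring$(G,\mu,h)$: if $h=0$, return a proper $(\Delta(G)+1)$-edge-coloring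 of (the undirected) $G$ computed by a base-case subroutine. Otherwise compute an oriented degree-splitting $(E_1,E_2)$ of $(G,\mu)$ with discrepancy at most 1 (computable in $O(|E|)$ time), let $G_1=(V,E_1)$, $G_2=(V,E_2)$ with the orientation induced by $\mu$, recursively compute $\varphi_1=$ Oriented Edge-Coloring$(G_1,\mu,h-1)$, $\varphi_2=$ Oriented Edge-Coloring$(G_2,\mu,h-1)$, and return $\varphi(e)=\varphi_1(e)$ on $E_1$ and $\varphi(e)=p_1+\varphi_2(e)$ on $E_2$, where $p_1$ is the palette size of $\varphi_1$. Procedure Arboricity Edge-Coloring$(G,h)$: compute $\mu=$ Forests-Decomposition Orientation$(G)$ and return Oriented Edge-Coloring$(G,\mu,h)$. Deterministic version: the base-case subroutine is a deterministic algorithm computing a proper $(\Delta'+1)$-edge-coloring of an $n'$-vertex $m'$-edge graph with maximum degree $\Delta'$ and arboricity $\alpha'$ in $O(m'\alpha'^7\log n')$ time. Randomized version: the base-case subroutine is a randomized algorithm computing a proper $(\Delta'+1)$-edge-coloring in expected $O(m'\alpha'\log n')$ time. *)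

theory Defs
  imports Complex_Main
begin

definition simple_graph :: "'a set \<Rightarrow> 'a set set \<Rightarrow> bool" where
  "simple_graph V E \<longleftrightarrow> finite V \<and>
     (\<forall>e\<in>E. \<exists>u v. e = {u, v} \<and> u \<noteq> v \<and> u \<in> V \<and> v \<in> V)"

definition degree :: "'a set set \<Rightarrow> 'a \<Rightarrow> nat" where
  "degree E v = card {e \<in> E. v \<in> e}"

definition max_degree :: "'a set \<Rightarrow> 'a set set \<Rightarrow> nat" where
  "max_degree V E = Max (insert 0 (degree E ` V))"

definition induced_edges :: "'a set set \<Rightarrow> 'a set \<Rightarrow> 'a set set" where
  "induced_edges E S = {e \<in> E. e \<subseteq> S}"

definition arboricity :: "'a set \<Rightarrow> 'a set set \<Rightarrow> nat" where
  "arboricity V E = Max (insert 0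
     {nat \<lceil>real (card (induced_edges E S)) / real (card S - 1)\<rceil> | S. S \<subseteq> V \<and> card S \<ge> 2})"

definition proper_edge_coloring :: "'a set set \<Rightarrow> ('a set \<Rightarrow> nat) \<Rightarrow> nat \<Rightarrow> bool" where
  "proper_edge_coloring E \<phi> k \<longleftrightarrow>
     (\<forall>e\<in>E. \<phi> e \<in> {1..k}) \<and>
     (\<forall>e1\<in>E. \<forall>e2\<in>E. e1 \<noteq> e2 \<and> e1 \<inter> e2 \<noteq> {} \<longrightarrow> \<phi> e1 \<noteq> \<phi> e2)"

definition orientation :: "'a set set \<Rightarrow> ('a \<times> 'a) set \<Rightarrow> bool" where
  "orientation E D \<longleftrightarrow> (\<forall>(u, v)\<in>D. {u, v} \<in> E) \<and>
     (\<forall>e\<in>E. \<exists>!a. a \<in> D \<and> (case a of (u, v) \<Rightarrow> {u, v} = e))"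

definition restrict_orient :: "('a \<times> 'a) set \<Rightarrow> 'a set set \<Rightarrow> ('a \<times> 'a) set" where
  "restrict_orient D E1 = {(u, v) \<in> D. {u, v} \<in> E1}"

definition indeg_in :: "('a \<times> 'a) set \<Rightarrow> 'a set set \<Rightarrow> 'a \<Rightarrow> nat" where
  "indeg_in D E1 v = card {u. (u, v) \<in> D \<and> {u, v} \<in> E1}"

definition outdeg_in :: "('a \<times> 'a) set \<Rightarrow> 'a set set \<Rightarrow> 'a \<Rightarrow> nat" where
  "outdeg_in D E1 v = card {w. (v, w) \<in> D \<and> {v, w} \<in> E1}"

definition oriented_splitting ::
  "'a set \<Rightarrow> 'a set set \<Rightarrow> ('a \<times> 'a) set \<Rightarrow> 'a set set \<Rightarrow> 'a set set \<Rightarrow> nat \<Rightarrow> bool" where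
  "oriented_splitting V E D E1 E2 \<kappa> \<longleftrightarrow>
     E1 \<union> E2 = E \<and> E1 \<inter> E2 = {} \<and>
     (\<forall>v\<in>V. \<bar>int (indeg_in D E1 v) - int (indeg_in D E2 v)\<bar> \<le> int \<kappa> \<and>
             \<bar>int (outdeg_in D E1 v) - int (outdeg_in D E2 v)\<bar> \<le> int \<kappa>)"

text \<open>Possible outputs: vs lists V in the order of removal; each removed vertex has
  minimum degree in the graph induced by the remaining set; edges oriented from earlier
  removed to later removed vertex.\<close>
definition forests_decomposition_orientation ::
  "'a set \<Rightarrow> 'a set set \<Rightarrow> ('a \<times> 'a) set \<Rightarrow> bool" where
  "forests_decomposition_orientation V E D \<longleftrightarrow>
     (\<exists>vs. distinct vs \<and> set vs = V \<and>
        (\<forall>i < length vs. \<forall>u \<in> set (drop i vs).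
           degree (induced_edges E (set (drop i vs))) (vs ! i)
             \<le> degree (induced_edges E (set (drop i vs))) u) \<and>
        D = {(vs ! i, vs ! j) | i j. i < j \<and> j < length vs \<and> {vs ! i, vs ! j} \<in> E})"

text \<open>oriented_edge_coloring Bnd cs V E D h \<phi> p t: \<phi> is a possible output of
  Oriented Edge-Coloring((V,E),D,h), p its palette size, and t its (expected) running time,
  where a base-case call on an n'-vertex m'-edge graph of arboricity a' costs at most
  Bnd n' m' a', and the splitting plus recombination at a node with edge set E costs at
  most cs * |E|.\<close>
inductive oriented_edge_coloring ::
  "(nat \<Rightarrow> nat \<Rightarrow> nat \<Rightarrow> real) \<Rightarrow> real \<Rightarrow> 'a set \<Rightarrow> 'a set set \<Rightarrow> ('a \<times> 'a) set
    \<Rightarrow> nat \<Rightarrow> ('a set \<Rightarrow> nat) \<Rightarrow> nat \<Rightarrow> real \<Rightarrow> bool"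
  for Bnd cs where
  base: "proper_edge_coloring E \<phi> (max_degree V E + 1) \<Longrightarrow>
         t \<le> Bnd (card V) (card E) (arboricity V E) \<Longrightarrow>
         oriented_edge_coloring Bnd cs V E D 0 \<phi> (max_degree V E + 1) t"
| step: "oriented_splitting V E D E1 E2 1 \<Longrightarrow>
         oriented_edge_coloring Bnd cs V E1 (restrict_orient D E1) h \<phi>1 p1 t1 \<Longrightarrow>
         oriented_edge_coloring Bnd cs V E2 (restrict_orient D E2) h \<phi>2 p2 t2 \<Longrightarrow>
         t \<le> t1 + t2 + cs * real (card E) \<Longrightarrow>
         oriented_edge_coloring Bnd cs V E D (Suc h)
           (\<lambda>e. if e \<in> E1 then \<phi>1 e else p1 + \<phi>2 e) (p1 + p2) t"

definition arboricity_edge_coloring ::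
  "(nat \<Rightarrow> nat \<Rightarrow> nat \<Rightarrow> real) \<Rightarrow> real \<Rightarrow> real \<Rightarrow> 'a set \<Rightarrow> 'a set set
    \<Rightarrow> nat \<Rightarrow> ('a set \<Rightarrow> nat) \<Rightarrow> real \<Rightarrow> bool" where
  "arboricity_edge_coloring Bnd cs co V E h \<phi> t \<longleftrightarrow>
     (\<exists>D p t'. forests_decomposition_orientation V E D \<and>
        oriented_edge_coloring Bnd cs V E D h \<phi> p t' \<and>
        t \<le> t' + co * real (card E))"

end

theory Submission
  imports Defs
begin

text \<open>Removing a vertex of minimum degree in the remaining graph orients every edge
  acyclically, and that vertex has degree below 2\<alpha> there, so all out-degrees are at most 2\<alpha>.
  A splitting of discrepancy 1 halves in- and out-degrees up to rounding. For the palette this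
  gives p + 2 \<le> \<Delta> + 3 * 2^h by induction, and the choice of h makes 3 * 2^h \<le> \<epsilon>\<alpha> + 2.
  For the running time, the leaves of the recursion carry acyclic orientations of out-degree
  at most 1 + (2\<alpha> - 1) / 2^h \<le> 13/\<epsilon>, which bounds their arboricity, so the base cases cost
  O(m log n / \<epsilon>^q) in total, while each of the h \<le> 2 log n levels of splitting costs O(m).\<close>

section \<open>Simple graphs and orientations\<close>

lemma simple_graph_mono: "simple_graph V E \<Longrightarrow> E' \<subseteq> E \<Longrightarrow> simple_graph V E'"
  unfolding simple_graph_def by blast

lemma simple_graph_edge:
  assumes "simple_graph V E" "e \<in> E"
  shows "e \<subseteq> V" "card e = 2"
  using assms unfolding simple_graph_def by auto

lemma simple_graph_finite_edges: "simple_graph V E \<Longrightarrow> finite E"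
  by (rule finite_subset[of E "Pow V"]) (auto simp: simple_graph_def)

lemma simple_graph_edge_not_loop: "simple_graph V E \<Longrightarrow> {v, v} \<notin> E"
  using simple_graph_edge(2) by fastforce

lemma card_edges_le_square:
  assumes "simple_graph V E"
  shows "card E \<le> card V ^ 2"
proof -
  have "finite V" using assms by (simp add: simple_graph_def)
  have "E \<subseteq> (\<lambda>(u, v). {u, v}) ` (V \<times> V)"
    using assms unfolding simple_graph_def by auto
  then have "card E \<le> card (V \<times> V)"
    using \<open>finite V\<close> by (meson card_image_le card_mono finite_SigmaI finite_imageI order_trans)
  then show ?thesis by (simp add: card_cartesian_product power2_eq_square)
qed

lemma sum_degree_eq_twice_card:
  assumes "simple_graph V E"
  shows "(\<Sum>v\<in>V. degree E v) = 2 * card E"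
proof -
  have "finite V" "finite E" using assms simple_graph_finite_edges by (auto simp: simple_graph_def)
  have "(\<Sum>v\<in>V. degree E v) = (\<Sum>v\<in>V. \<Sum>e\<in>E. of_bool (v \<in> e) :: nat)"
    unfolding degree_def using \<open>finite E\<close> by (simp add: Int_def conj_commute)
  also have "\<dots> = (\<Sum>e\<in>E. \<Sum>v\<in>V. of_bool (v \<in> e))" by (rule sum.swap)
  also have "\<dots> = (\<Sum>e\<in>E. card e)"
    using \<open>finite V\<close> simple_graph_edge[OF assms] by (intro sum.cong) (auto simp: Int_absorb1)
  also have "\<dots> = 2 * card E" using simple_graph_edge(2)[OF assms] by simp
  finally show ?thesis .
qed

lemma finite_in_neighbours: "simple_graph V E \<Longrightarrow> finite {u. (u, v) \<in> D \<and> {u, v} \<in> E}"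
  by (rule finite_subset[of _ V]) (auto simp: simple_graph_def doubleton_eq_iff)

lemma finite_out_neighbours: "simple_graph V E \<Longrightarrow> finite {w. (v, w) \<in> D \<and> {v, w} \<in> E}"
  by (rule finite_subset[of _ V]) (auto simp: simple_graph_def doubleton_eq_iff)

lemma indeg_in_Un:
  assumes "simple_graph V (E1 \<union> E2)" "E1 \<inter> E2 = {}"
  shows "indeg_in D (E1 \<union> E2) v = indeg_in D E1 v + indeg_in D E2 v"
proof -
  have "simple_graph V E1" "simple_graph V E2" using assms(1) simple_graph_mono by blast+
  then show ?thesis unfolding indeg_in_def using assms(2)
    by (subst card_Un_disjoint[symmetric]) (auto intro!: arg_cong[where f = card] finite_in_neighbours)
qed

lemma outdeg_in_Un:
  assumes "simple_graph V (E1 \<union> E2)" "E1 \<inter> E2 = {}"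
  shows "outdeg_in D (E1 \<union> E2) v = outdeg_in D E1 v + outdeg_in D E2 v"
proof -
  have "simple_graph V E1" "simple_graph V E2" using assms(1) simple_graph_mono by blast+
  then show ?thesis unfolding outdeg_in_def using assms(2)
    by (subst card_Un_disjoint[symmetric]) (auto intro!: arg_cong[where f = card] finite_out_neighbours)
qed

lemma indeg_in_restrict_orient [simp]: "indeg_in (restrict_orient D E1) E1 v = indeg_in D E1 v"
  unfolding indeg_in_def restrict_orient_def by simp

lemma outdeg_in_restrict_orient [simp]: "outdeg_in (restrict_orient D E1) E1 v = outdeg_in D E1 v"
  unfolding outdeg_in_def restrict_orient_def by simp

lemma orientation_unique_arc:
  assumes "orientation E D" "e \<in> E"
  shows "\<exists>!a. a \<in> D \<and> (case a of (u, v) \<Rightarrow> {u, v} = e)"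
proof -
  have "\<forall>e\<in>E. \<exists>!a. a \<in> D \<and> (case a of (u, v) \<Rightarrow> {u, v} = e)"
    using assms(1) unfolding orientation_def by (rule conjunct2)
  then show ?thesis using assms(2) by (rule bspec)
qed

lemma orientation_arc_edge: "orientation E D \<Longrightarrow> (u, v) \<in> D \<Longrightarrow> {u, v} \<in> E"
  unfolding orientation_def by blast

lemma orientation_edge_arc:
  assumes "orientation E D" "e \<in> E"
  obtains u v where "(u, v) \<in> D" "e = {u, v}"
proof -
  obtain a where "a \<in> D \<and> (case a of (u, v) \<Rightarrow> {u, v} = e)"
    using orientation_unique_arc[OF assms] by (rule ex1E)
  then show thesis using that by (cases a) auto
qed

lemma orientation_antisym:
  assumes "orientation E D" "(u, v) \<in> D" "(v, u) \<in> D"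
  shows "u = v"
proof -
  obtain a where "\<forall>b. b \<in> D \<and> (case b of (x, y) \<Rightarrow> {x, y} = {u, v}) \<longrightarrow> b = a"
    using orientation_unique_arc[OF assms(1) orientation_arc_edge[OF assms(1,2)]] by (rule ex1E)
  then have "(u, v) = a" "(v, u) = a" using assms(2,3) by (auto simp: insert_commute)
  then show ?thesis by auto
qed

lemma orientation_restrict_orient:
  assumes "orientation E D" "E1 \<subseteq> E"
  shows "orientation E1 (restrict_orient D E1)"
  unfolding orientation_def
proof (intro conjI ballI)
  fix e assume "e \<in> E1"
  with assms(2) have "e \<in> E" by blast
  obtain a where a: "a \<in> D \<and> (case a of (u, v) \<Rightarrow> {u, v} = e)"
    and uniq: "\<forall>b. b \<in> D \<and> (case b of (u, v) \<Rightarrow> {u, v} = e) \<longrightarrow> b = a"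
    using orientation_unique_arc[OF assms(1) \<open>e \<in> E\<close>] by (rule ex1E)
  show "\<exists>!a. a \<in> restrict_orient D E1 \<and> (case a of (u, v) \<Rightarrow> {u, v} = e)"
  proof (rule ex1I[of _ a])
    show "a \<in> restrict_orient D E1 \<and> (case a of (u, v) \<Rightarrow> {u, v} = e)"
      using a \<open>e \<in> E1\<close> unfolding restrict_orient_def by (cases a) simp
  next
    fix b assume "b \<in> restrict_orient D E1 \<and> (case b of (u, v) \<Rightarrow> {u, v} = e)"
    then show "b = a" using uniq unfolding restrict_orient_def by blast
  qed
next
  fix a assume "a \<in> restrict_orient D E1"
  then show "case a of (u, v) \<Rightarrow> {u, v} \<in> E1"
    unfolding restrict_orient_def by auto
qed

lemma degree_eq_indeg_add_outdeg:
  assumes "simple_graph V E" "orientation E D"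
  shows "degree E v = indeg_in D E v + outdeg_in D E v"
proof -
  let ?I = "{u. (u, v) \<in> D \<and> {u, v} \<in> E}" and ?O = "{w. (v, w) \<in> D \<and> {v, w} \<in> E}"
  have "?I \<inter> ?O = {}"
    using orientation_antisym[OF assms(2)] simple_graph_edge_not_loop[OF assms(1)] by blast
  then have "indeg_in D E v + outdeg_in D E v = card (?I \<union> ?O)"
    unfolding indeg_in_def outdeg_in_def
    using assms(1) by (simp add: card_Un_disjoint finite_in_neighbours finite_out_neighbours)
  also have "\<dots> = card ((\<lambda>u. {u, v}) ` (?I \<union> ?O))"
    by (rule card_image[symmetric]) (auto intro: inj_onI simp: doubleton_eq_iff)
  also have "(\<lambda>u. {u, v}) ` (?I \<union> ?O) = {e \<in> E. v \<in> e}"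
  proof
    show "{e \<in> E. v \<in> e} \<subseteq> (\<lambda>u. {u, v}) ` (?I \<union> ?O)"
    proof
      fix e assume "e \<in> {e \<in> E. v \<in> e}"
      then obtain a b where "(a, b) \<in> D" "e = {a, b}" "e \<in> E" "v \<in> e"
        using orientation_edge_arc[OF assms(2)] by blast
      then show "e \<in> (\<lambda>u. {u, v}) ` (?I \<union> ?O)" by (auto simp: insert_commute)
    qed
  next
    show "(\<lambda>u. {u, v}) ` (?I \<union> ?O) \<subseteq> {e \<in> E. v \<in> e}"
    proof (rule image_subsetI)
      fix x assume "x \<in> ?I \<union> ?O"
      then have "{x, v} \<in> E" by (auto simp: insert_commute)
      then show "{x, v} \<in> {e \<in> E. v \<in> e}" by simp
    qed
  qed
  finally show ?thesis unfolding degree_def by simp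
qed

lemma degree_le_max_degree: "finite V \<Longrightarrow> v \<in> V \<Longrightarrow> degree E v \<le> max_degree V E"
  unfolding max_degree_def by simp

lemma max_degree_le: "finite V \<Longrightarrow> (\<And>v. v \<in> V \<Longrightarrow> degree E v \<le> d) \<Longrightarrow> max_degree V E \<le> d"
  unfolding max_degree_def by simp

section \<open>Oriented degree-splittings\<close>

lemma oriented_splitting_commute:
  "oriented_splitting V E D E1 E2 \<kappa> \<longleftrightarrow> oriented_splitting V E D E2 E1 \<kappa>"
  unfolding oriented_splitting_def by (auto simp: abs_minus_commute)

lemma oriented_splitting_restrict:
  assumes "oriented_splitting V E D E1 E2 \<kappa>" "simple_graph V E" "orientation E D"
  shows "simple_graph V E1" "orientation E1 (restrict_orient D E1)"
proof -
  have "E1 \<subseteq> E" using assms(1) unfolding oriented_splitting_def by blast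
  then show "simple_graph V E1" "orientation E1 (restrict_orient D E1)"
    using simple_graph_mono[OF assms(2)] orientation_restrict_orient[OF assms(3)] by blast+
qed

lemma restrict_orient_ranked:
  "\<forall>(u, w)\<in>D. r u < r w \<Longrightarrow> \<forall>(u, w)\<in>restrict_orient D E1. r u < r w"
  unfolding restrict_orient_def by auto

lemma oriented_splitting_half_degrees:
  assumes "oriented_splitting V E D E1 E2 \<kappa>" "simple_graph V E" "v \<in> V"
  shows "2 * indeg_in D E1 v \<le> indeg_in D E v + \<kappa>"
    and "2 * outdeg_in D E1 v \<le> outdeg_in D E v + \<kappa>"
proof -
  have E: "E = E1 \<union> E2" "E1 \<inter> E2 = {}"
    and "\<bar>int (indeg_in D E1 v) - int (indeg_in D E2 v)\<bar> \<le> int \<kappa>"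
    and "\<bar>int (outdeg_in D E1 v) - int (outdeg_in D E2 v)\<bar> \<le> int \<kappa>"
    using assms(1,3) unfolding oriented_splitting_def by auto
  moreover have sg: "simple_graph V (E1 \<union> E2)" using assms(2) E(1) by simp
  have "indeg_in D E v = indeg_in D E1 v + indeg_in D E2 v"
    using indeg_in_Un[OF sg E(2)] E(1) by simp
  moreover have "outdeg_in D E v = outdeg_in D E1 v + outdeg_in D E2 v"
    using outdeg_in_Un[OF sg E(2)] E(1) by simp
  ultimately show "2 * indeg_in D E1 v \<le> indeg_in D E v + \<kappa>"
    and "2 * outdeg_in D E1 v \<le> outdeg_in D E v + \<kappa>" by linarith+
qed

lemma oriented_splitting_max_degree:
  assumes "oriented_splitting V E D E1 E2 \<kappa>" "simple_graph V E" "orientation E D"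
  shows "2 * max_degree V E1 \<le> max_degree V E + 2 * \<kappa>"
proof -
  have "finite V" using assms(2) by (simp add: simple_graph_def)
  have "2 * degree E1 v \<le> max_degree V E + 2 * \<kappa>" if "v \<in> V" for v
  proof -
    have "degree E1 v = indeg_in D E1 v + outdeg_in D E1 v"
      using degree_eq_indeg_add_outdeg[OF oriented_splitting_restrict[OF assms]] by simp
    moreover have "degree E v = indeg_in D E v + outdeg_in D E v"
      using degree_eq_indeg_add_outdeg[OF assms(2,3)] .
    moreover have "degree E v \<le> max_degree V E"
      using degree_le_max_degree[OF \<open>finite V\<close> that] .
    ultimately show ?thesis
      using oriented_splitting_half_degrees[OF assms(1,2) that] by linarith
  qed
  then have "max_degree V E1 \<le> (max_degree V E + 2 * \<kappa>) div 2"
    by (intro max_degree_le[OF \<open>finite V\<close>]) (metis less_eq_div_iff_mult_less_eq mult.commute pos2)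
  then show ?thesis by linarith
qed

lemma proper_edge_coloring_Un_shift:
  assumes "proper_edge_coloring E1 \<phi>1 p1" "proper_edge_coloring E2 \<phi>2 p2" "E1 \<inter> E2 = {}"
  shows "proper_edge_coloring (E1 \<union> E2) (\<lambda>e. if e \<in> E1 then \<phi>1 e else p1 + \<phi>2 e) (p1 + p2)"
proof -
  have range1: "1 \<le> \<phi>1 e \<and> \<phi>1 e \<le> p1" if "e \<in> E1" for e
    using assms(1) that unfolding proper_edge_coloring_def by auto
  have range2: "1 \<le> \<phi>2 e \<and> \<phi>2 e \<le> p2" if "e \<in> E2" for e
    using assms(2) that unfolding proper_edge_coloring_def by auto
  have distinct1: "\<phi>1 e \<noteq> \<phi>1 e'" if "e \<in> E1" "e' \<in> E1" "e \<noteq> e'" "e \<inter> e' \<noteq> {}" for e e'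
    using assms(1) that unfolding proper_edge_coloring_def by blast
  have distinct2: "\<phi>2 e \<noteq> \<phi>2 e'" if "e \<in> E2" "e' \<in> E2" "e \<noteq> e'" "e \<inter> e' \<noteq> {}" for e e'
    using assms(2) that unfolding proper_edge_coloring_def by blast
  show ?thesis
    unfolding proper_edge_coloring_def
  proof (intro conjI ballI impI)
    fix e assume "e \<in> E1 \<union> E2"
    then show "(if e \<in> E1 then \<phi>1 e else p1 + \<phi>2 e) \<in> {1..p1 + p2}"
      using range1 range2 by force
  next
    fix e e' assume e: "e \<in> E1 \<union> E2" "e' \<in> E1 \<union> E2" "e \<noteq> e' \<and> e \<inter> e' \<noteq> {}"
    show "(if e \<in> E1 then \<phi>1 e else p1 + \<phi>2 e) \<noteq> (if e' \<in> E1 then \<phi>1 e' else p1 + \<phi>2 e')"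
    proof (cases "e \<in> E1"; cases "e' \<in> E1")
      assume "e \<in> E1" "e' \<in> E1"
      then show ?thesis using distinct1 e(3) by simp
    next
      assume "e \<notin> E1" "e' \<notin> E1"
      then show ?thesis using distinct2 e by simp
    next
      assume "e \<in> E1" "e' \<notin> E1"
      then show ?thesis using range1[of e] range2[of e'] e(2) by simp
    next
      assume "e \<notin> E1" "e' \<in> E1"
      then show ?thesis using range2[of e] range1[of e'] e(1) by simp
    qed
  qed
qed

section \<open>Arboricity\<close>

lemma finite_arboricity_candidates:
  "finite V \<Longrightarrow>
   finite {nat \<lceil>real (card (induced_edges E S)) / real (card S - 1)\<rceil> | S. S \<subseteq> V \<and> card S \<ge> 2}"
  by (rule finite_subset[OF _ finite_imageI[OF finite_Pow_iff[THEN iffD2]]]) auto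

lemma arboricity_le:
  assumes "finite V"
    and "\<And>S. S \<subseteq> V \<Longrightarrow> 2 \<le> card S \<Longrightarrow> card (induced_edges E S) \<le> d * (card S - 1)"
  shows "arboricity V E \<le> d"
proof -
  have "nat \<lceil>real (card (induced_edges E S)) / real (card S - 1)\<rceil> \<le> d"
    if "S \<subseteq> V" "2 \<le> card S" for S
  proof -
    have "real (card (induced_edges E S)) \<le> real d * real (card S - 1)"
      using assms(2)[OF that] by (metis of_nat_le_iff of_nat_mult)
    then have "real (card (induced_edges E S)) / real (card S - 1) \<le> real d"
      using that(2) by (simp add: divide_le_eq)
    then show ?thesis by (simp add: ceiling_le_iff nat_le_iff)
  qed
  then show ?thesis
    unfolding arboricity_def using finite_arboricity_candidates[OF assms(1)] by auto
qed

lemma card_induced_edges_le_arboricity: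
  assumes "simple_graph V E" "S \<subseteq> V"
  shows "card (induced_edges E S) \<le> arboricity V E * (card S - 1)"
proof (cases "2 \<le> card S")
  case True
  have "finite V" using assms(1) by (simp add: simple_graph_def)
  then have "nat \<lceil>real (card (induced_edges E S)) / real (card S - 1)\<rceil> \<le> arboricity V E"
    unfolding arboricity_def using finite_arboricity_candidates assms(2) True
    by (intro Max_ge) blast+
  then have "real (card (induced_edges E S)) / real (card S - 1) \<le> real (arboricity V E)"
    by (simp add: nat_le_iff ceiling_le_iff)
  then have "real (card (induced_edges E S)) \<le> real (arboricity V E) * real (card S - 1)"
    using True by (simp add: divide_le_eq)
  then show ?thesis by (metis of_nat_le_iff of_nat_mult)
next
  case False
  have "finite S" using assms by (meson finite_subset simple_graph_def)
  have "induced_edges E S = {}"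
  proof (rule equals0I)
    fix e assume "e \<in> induced_edges E S"
    then have "card e = 2" "e \<subseteq> S"
      using simple_graph_edge(2)[OF assms(1)] unfolding induced_edges_def by auto
    then have "card e \<le> card S" using card_mono[OF \<open>finite S\<close>] by blast
    with False \<open>card e = 2\<close> show False by simp
  qed
  then show ?thesis by simp
qed

lemma arboricity_pos:
  assumes "simple_graph V E" "E \<noteq> {}"
  shows "1 \<le> arboricity V E"
proof -
  obtain e where "e \<in> E" using assms(2) by blast
  then have "e \<in> induced_edges E e" "card e = 2" "e \<subseteq> V"
    using simple_graph_edge[OF assms(1)] unfolding induced_edges_def by auto
  moreover have "finite (induced_edges E e)"
    using simple_graph_finite_edges[OF assms(1)] unfolding induced_edges_def by simp
  ultimately have "1 \<le> card (induced_edges E e)" by (metis card_0_eq empty_iff less_one not_le)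
  also have "\<dots> \<le> arboricity V E * (card e - 1)"
    by (rule card_induced_edges_le_arboricity[OF assms(1) \<open>e \<subseteq> V\<close>])
  finally show ?thesis using \<open>card e = 2\<close> by simp
qed

lemma arboricity_le_card_edges:
  assumes "simple_graph V E"
  shows "arboricity V E \<le> card E"
proof (rule arboricity_le)
  show "finite V" using assms by (simp add: simple_graph_def)
  fix S :: "'a set" assume "2 \<le> card S"
  have "card (induced_edges E S) \<le> card E"
    using simple_graph_finite_edges[OF assms] unfolding induced_edges_def by (intro card_mono) auto
  also have "\<dots> \<le> card E * (card S - 1)" using \<open>2 \<le> card S\<close> by (simp add: Suc_le_eq)
  finally show "card (induced_edges E S) \<le> card E * (card S - 1)" .
qed

text \<open>The vertex of maximal rank in S has no out-arc inside S, so the out-arcs of the other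
  card S - 1 vertices cover all edges of G[S].\<close>
lemma arboricity_le_max_outdeg:
  fixes r :: "'a \<Rightarrow> nat"
  assumes "simple_graph V E" "orientation E D" "\<forall>(u, w)\<in>D. r u < r w"
    and "\<And>v. v \<in> V \<Longrightarrow> outdeg_in D E v \<le> d"
  shows "arboricity V E \<le> d"
proof (rule arboricity_le)
  show "finite V" using assms(1) by (simp add: simple_graph_def)
  fix S assume S: "S \<subseteq> V" "2 \<le> card S"
  then have "finite S" "S \<noteq> {}" by (auto intro: finite_subset[OF _ \<open>finite V\<close>])
  then have "Max (r ` S) \<in> r ` S" by simp
  then obtain w where "Max (r ` S) = r w" "w \<in> S" by (rule imageE)
  then have w: "w \<in> S" "\<forall>x\<in>S. r x \<le> r w"
    using \<open>finite S\<close> by (auto simp flip: \<open>Max (r ` S) = r w\<close>)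
  let ?out = "\<lambda>a. (\<lambda>b. {a, b}) ` {b. (a, b) \<in> D \<and> {a, b} \<in> E}"
  have "induced_edges E S \<subseteq> (\<Union>a\<in>S - {w}. ?out a)"
  proof
    fix e assume "e \<in> induced_edges E S"
    then have "e \<in> E" "e \<subseteq> S" unfolding induced_edges_def by auto
    then obtain a b where "(a, b) \<in> D" "e = {a, b}" using orientation_edge_arc[OF assms(2)] by blast
    moreover have "a \<noteq> w"
      using assms(3) w(2) \<open>(a, b) \<in> D\<close> \<open>e \<subseteq> S\<close> \<open>e = {a, b}\<close> by fastforce
    ultimately show "e \<in> (\<Union>a\<in>S - {w}. ?out a)" using \<open>e \<in> E\<close> \<open>e \<subseteq> S\<close> by blast
  qed
  then have "card (induced_edges E S) \<le> card (\<Union>a\<in>S - {w}. ?out a)"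
    using \<open>finite S\<close> finite_out_neighbours[OF assms(1)] by (intro card_mono) auto
  also have "\<dots> \<le> (\<Sum>a\<in>S - {w}. card (?out a))"
    using \<open>finite S\<close> by (intro card_UN_le) simp
  also have "\<dots> \<le> (\<Sum>a\<in>S - {w}. d)"
  proof (rule sum_mono)
    fix a assume "a \<in> S - {w}"
    have "card (?out a) \<le> outdeg_in D E a"
      unfolding outdeg_in_def by (rule card_image_le) (rule finite_out_neighbours[OF assms(1)])
    also have "\<dots> \<le> d" using assms(4) S(1) \<open>a \<in> S - {w}\<close> by blast
    finally show "card (?out a) \<le> d" .
  qed
  also have "\<dots> = d * (card S - 1)" using w(1) \<open>finite S\<close> by simp
  finally show "card (induced_edges E S) \<le> d * (card S - 1)" .
qed

section \<open>The forests-decomposition orientation\<close>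

lemma simple_graph_induced:
  assumes "simple_graph V E" "S \<subseteq> V"
  shows "simple_graph S (induced_edges E S)"
  unfolding simple_graph_def
proof (intro conjI ballI)
  show "finite S"
    using assms(2) by (rule finite_subset) (use assms(1) in \<open>simp add: simple_graph_def\<close>)
  fix e assume "e \<in> induced_edges E S"
  then have "e \<in> E" "e \<subseteq> S" unfolding induced_edges_def by auto
  moreover obtain u v where "e = {u, v}" "u \<noteq> v"
    using assms(1) \<open>e \<in> E\<close> unfolding simple_graph_def by blast
  ultimately show "\<exists>u v. e = {u, v} \<and> u \<noteq> v \<and> u \<in> S \<and> v \<in> S" by blast
qed

lemma min_degree_le_twice_arboricity:
  assumes "simple_graph V E" "S \<subseteq> V" "v \<in> S"
    and "\<And>u. u \<in> S \<Longrightarrow> degree (induced_edges E S) v \<le> degree (induced_edges E S) u"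
  shows "degree (induced_edges E S) v \<le> 2 * arboricity V E"
proof -
  let ?E = "induced_edges E S"
  have "finite S" "S \<noteq> {}"
    using simple_graph_induced[OF assms(1,2)] assms(3) by (auto simp: simple_graph_def)
  have "card S * degree ?E v = (\<Sum>u\<in>S. degree ?E v)" by simp
  also have "\<dots> \<le> (\<Sum>u\<in>S. degree ?E u)" using assms(4) by (rule sum_mono)
  also have "\<dots> = 2 * card ?E" by (rule sum_degree_eq_twice_card[OF simple_graph_induced[OF assms(1,2)]])
  also have "\<dots> \<le> 2 * (arboricity V E * (card S - 1))"
    using card_induced_edges_le_arboricity[OF assms(1,2)] by simp
  also have "\<dots> \<le> card S * (2 * arboricity V E)" by (simp add: algebra_simps)
  finally show ?thesis using \<open>finite S\<close> \<open>S \<noteq> {}\<close> by (simp add: card_gt_0_iff)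
qed

definition orient_along :: "'a set set \<Rightarrow> 'a list \<Rightarrow> ('a \<times> 'a) set" where
  "orient_along E vs = {(vs ! i, vs ! j) | i j. i < j \<and> j < length vs \<and> {vs ! i, vs ! j} \<in> E}"

lemma orient_along_ranked:
  assumes "distinct vs"
  shows "\<forall>(u, w)\<in>orient_along E vs.
           the_inv_into {..<length vs} ((!) vs) u < the_inv_into {..<length vs} ((!) vs) w"
proof -
  have "the_inv_into {..<length vs} ((!) vs) (vs ! i) = i" if "i < length vs" for i
    using that assms by (simp add: inj_on_nth the_inv_into_f_f)
  then show ?thesis unfolding orient_along_def by auto
qed

lemma orientation_orient_along:
  assumes "simple_graph V E" "distinct vs" "set vs = V"
  shows "orientation E (orient_along E vs)"
  unfolding orientation_def
proof (intro conjI ballI)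
  let ?D = "orient_along E vs"
  have asym: "(w, u) \<notin> ?D" if "(u, w) \<in> ?D" for u w
    using bspec[OF orient_along_ranked[OF assms(2)] that]
      bspec[OF orient_along_ranked[OF assms(2)], of "(w, u)"] by auto
  fix e assume "e \<in> E"
  then obtain u w where e: "e = {u, w}" "u \<noteq> w" "u \<in> V" "w \<in> V"
    using assms(1) unfolding simple_graph_def by blast
  then obtain i j where ij: "i < length vs" "vs ! i = u" "j < length vs" "vs ! j = w"
    using assms(3) by (metis in_set_conv_nth)
  have "{vs ! i, vs ! j} \<in> E" "{vs ! j, vs ! i} \<in> E"
    using ij \<open>e \<in> E\<close> e(1) by (simp_all add: insert_commute)
  moreover have "i < j \<or> j < i" using e(2) ij by (metis nat_neq_iff)
  ultimately have "(u, w) \<in> ?D \<or> (w, u) \<in> ?D" unfolding orient_along_def using ij by blast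
  then obtain a where a: "a \<in> ?D" "case a of (x, y) \<Rightarrow> {x, y} = e"
    using e(1) by (auto simp: insert_commute)
  moreover have "b = a" if "b \<in> ?D" "case b of (x, y) \<Rightarrow> {x, y} = e" for b
    using that a asym by (auto simp: doubleton_eq_iff split: prod.splits)
  ultimately show "\<exists>!a. a \<in> ?D \<and> (case a of (x, y) \<Rightarrow> {x, y} = e)" by blast
next
  fix a assume "a \<in> orient_along E vs"
  then show "case a of (u, w) \<Rightarrow> {u, w} \<in> E" unfolding orient_along_def by auto
qed

lemma outdeg_orient_along_le:
  assumes "simple_graph V E" "distinct vs" "set vs = V" "i < length vs"
    and "\<forall>u \<in> set (drop i vs). degree (induced_edges E (set (drop i vs))) (vs ! i)
           \<le> degree (induced_edges E (set (drop i vs))) u"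
  shows "outdeg_in (orient_along E vs) E (vs ! i) \<le> 2 * arboricity V E"
proof -
  define S v where "S = set (drop i vs)" and "v = vs ! i"
  have "S \<subseteq> V" unfolding S_def assms(3)[symmetric] by (rule set_drop_subset)
  have "v \<in> S" unfolding S_def v_def using assms(4) by (metis Cons_nth_drop_Suc list.set_intros(1))
  have out_S: "w \<in> S" if arc: "(v, w) \<in> orient_along E vs" for w
  proof -
    obtain i' j where "v = vs ! i'" "w = vs ! j" "i' < j" "j < length vs"
      using arc unfolding orient_along_def by blast
    moreover from this have "i' = i" using assms(2,4) nth_eq_iff_index_eq unfolding v_def by fastforce
    ultimately show "w \<in> S" unfolding S_def by (auto simp: in_set_conv_nth intro!: exI[of _ "j - i"])
  qed
  have "outdeg_in (orient_along E vs) E v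
      = card ((\<lambda>w. {v, w}) ` {w. (v, w) \<in> orient_along E vs \<and> {v, w} \<in> E})"
    unfolding outdeg_in_def by (rule card_image[symmetric]) (auto intro: inj_onI simp: doubleton_eq_iff)
  also have "\<dots> \<le> degree (induced_edges E S) v"
    unfolding degree_def induced_edges_def
    using out_S \<open>v \<in> S\<close> simple_graph_finite_edges[OF assms(1)] by (intro card_mono) auto
  also have "\<dots> \<le> 2 * arboricity V E"
    using assms(5) \<open>S \<subseteq> V\<close> \<open>v \<in> S\<close> unfolding S_def v_def
    by (intro min_degree_le_twice_arboricity[OF assms(1)]) auto
  finally show ?thesis unfolding v_def .
qed

lemma forests_decomposition_orientationE:
  assumes "simple_graph V E" "forests_decomposition_orientation V E D"
  obtains r :: "'a \<Rightarrow> nat"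
  where "\<forall>(u, w)\<in>D. r u < r w" "orientation E D"
    and "\<And>v. v \<in> V \<Longrightarrow> outdeg_in D E v \<le> 2 * arboricity V E"
proof -
  obtain vs where vs: "distinct vs" "set vs = V" and D: "D = orient_along E vs"
    and min_deg: "\<forall>i < length vs. \<forall>u \<in> set (drop i vs).
           degree (induced_edges E (set (drop i vs))) (vs ! i)
             \<le> degree (induced_edges E (set (drop i vs))) u"
    using assms(2) unfolding forests_decomposition_orientation_def orient_along_def by blast
  have "outdeg_in D E v \<le> 2 * arboricity V E" if "v \<in> V" for v
  proof -
    have "v \<in> set vs" using that vs(2) by simp
    then obtain i where "i < length vs" "v = vs ! i" by (auto simp: in_set_conv_nth)
    then show ?thesis
      unfolding D using outdeg_orient_along_le[OF assms(1) vs] min_deg by blast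
  qed
  then show thesis
    using that orient_along_ranked[OF vs(1)] orientation_orient_along[OF assms(1) vs] unfolding D
    by blast
qed

section \<open>Invariants of Oriented Edge-Coloring\<close>

lemma oriented_edge_coloring_proper:
  "oriented_edge_coloring Bnd cs V E D h \<phi> p t \<Longrightarrow> proper_edge_coloring E \<phi> p"
proof (induction rule: oriented_edge_coloring.induct)
  case (step V E D E1 E2 h \<phi>1 p1 t1 \<phi>2 p2 t2 t)
  then have "E = E1 \<union> E2" "E1 \<inter> E2 = {}" unfolding oriented_splitting_def by auto
  then show ?case using proper_edge_coloring_Un_shift step.IH by simp
qed

lemma oriented_edge_coloring_palette:
  assumes "oriented_edge_coloring Bnd cs V E D h \<phi> p t" "simple_graph V E" "orientation E D"
  shows "p + 2 \<le> max_degree V E + 3 * 2 ^ h"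
  using assms
proof (induction rule: oriented_edge_coloring.induct)
  case (step V E D E1 E2 h \<phi>1 p1 t1 \<phi>2 p2 t2 t)
  note split2 = step.hyps(1)[THEN oriented_splitting_commute[THEN iffD1]]
  have "p1 + 2 \<le> max_degree V E1 + 3 * 2 ^ h"
    using step.IH(1) oriented_splitting_restrict[OF step.hyps(1) step.prems] by blast
  moreover have "p2 + 2 \<le> max_degree V E2 + 3 * 2 ^ h"
    using step.IH(2) oriented_splitting_restrict[OF split2 step.prems] by blast
  moreover have "2 * max_degree V E1 \<le> max_degree V E + 2" "2 * max_degree V E2 \<le> max_degree V E + 2"
    using oriented_splitting_max_degree[OF step.hyps(1) step.prems]
      oriented_splitting_max_degree[OF split2 step.prems] by simp_all
  ultimately show ?case by simp
qed simp

text \<open>A splitting maps the out-degree bound Y to (Y + 1) / 2, so after h levels it is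
  1 + (Y - 1) / 2^h, which bounds the arboricity of the base cases.\<close>
lemma oriented_edge_coloring_time:
  fixes r :: "'a \<Rightarrow> nat" and Y K :: real
  assumes "oriented_edge_coloring Bnd cs V E D h \<phi> p t" "simple_graph V E" "orientation E D"
    and "\<forall>(u, w)\<in>D. r u < r w" "\<And>v. v \<in> V \<Longrightarrow> outdeg_in D E v \<le> Y" "0 \<le> Y"
    and "0 \<le> K" "\<And>m a. Bnd (card V) m a \<le> K * real m * real a ^ q"
  shows "t \<le> K * real (card E) * (1 + (Y - 1) / 2 ^ h) ^ q + \<bar>cs\<bar> * real h * real (card E)"
  using assms
proof (induction arbitrary: Y rule: oriented_edge_coloring.induct)
  case (base E \<phi> V t D)
  have "arboricity V E \<le> nat \<lfloor>Y\<rfloor>"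
    using base.prems(4) by (intro arboricity_le_max_outdeg[OF base.prems(1-3)]) (simp add: le_nat_floor)
  then have "real (arboricity V E) ^ q \<le> Y ^ q"
    using base.prems(5) by (intro power_mono) linarith+
  then have "K * real (card E) * real (arboricity V E) ^ q \<le> K * real (card E) * Y ^ q"
    using base.prems(6) by (intro mult_left_mono) auto
  then show ?case using base.hyps(2) base.prems(7)[of "card E" "arboricity V E"] by simp
next
  case (step V E D E1 E2 h \<phi>1 p1 t1 \<phi>2 p2 t2 t)
  note split2 = step.hyps(1)[THEN oriented_splitting_commute[THEN iffD1]]
  define Z where "Z = 1 + (Y - 1) / 2 ^ Suc h"
  have Z_half: "1 + ((Y + 1) / 2 - 1) / 2 ^ h = Z" unfolding Z_def by (simp add: field_simps)
  have outdeg_half: "real (outdeg_in D E' v) \<le> (Y + 1) / 2"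
    if "oriented_splitting V E D E' E'' 1" "v \<in> V" for E' E'' v
    using oriented_splitting_half_degrees(2)[OF that(1) step.prems(1) that(2)] step.prems(4)[OF that(2)]
    by simp
  have "t1 \<le> K * real (card E1) * Z ^ q + \<bar>cs\<bar> * real h * real (card E1)"
    using step.IH(1)[OF oriented_splitting_restrict[OF step.hyps(1) step.prems(1,2)]
        restrict_orient_ranked[OF step.prems(3)], where Y = "(Y + 1) / 2"]
      outdeg_half[OF step.hyps(1)] step.prems(5-7) unfolding Z_half by simp
  moreover have "t2 \<le> K * real (card E2) * Z ^ q + \<bar>cs\<bar> * real h * real (card E2)"
    using step.IH(2)[OF oriented_splitting_restrict[OF split2 step.prems(1,2)]
        restrict_orient_ranked[OF step.prems(3)], where Y = "(Y + 1) / 2"]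
      outdeg_half[OF split2] step.prems(5-7) unfolding Z_half by simp
  moreover have "E = E1 \<union> E2" "E1 \<inter> E2 = {}"
    using step.hyps(1) unfolding oriented_splitting_def by auto
  then have "real (card E) = real (card E1) + real (card E2)"
    using simple_graph_finite_edges[OF step.prems(1)] by (simp add: card_Un_disjoint)
  moreover have "cs * real (card E) \<le> \<bar>cs\<bar> * real (card E)" by (simp add: mult_right_mono)
  ultimately show ?case
    using step.hyps(4) unfolding Z_def by (simp add: algebra_simps)
qed

section \<open>The choice of the recursion depth\<close>

lemma recursion_depth_bounds:
  fixes x :: real
  assumes "1 \<le> x" "h = nat (max \<lfloor>log 2 (x / 3)\<rfloor> 0)"
  shows "3 * 2 ^ h \<le> x + 2" and "x < 6 * 2 ^ h"
proof -
  have "3 * 2 ^ h \<le> x + 2 \<and> x < 6 * 2 ^ h"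
  proof (cases "3 \<le> x")
    case True
    define l where "l = log 2 (x / 3)"
    have "0 \<le> l" unfolding l_def using True by simp
    then have "real h = of_int \<lfloor>l\<rfloor>" using assms(2) unfolding l_def by simp
    then have "real h \<le> l" "l < real h + 1" by linarith+
    then have "2 powr real h \<le> 2 powr l" "2 powr l < 2 powr (real h + 1)" by simp_all
    moreover have "2 powr l = x / 3" unfolding l_def using True by simp
    ultimately show ?thesis by (simp add: powr_add powr_realpow)
  next
    case False
    then have "log 2 (x / 3) < 0" using assms(1) by simp
    then have "h = 0" using assms(2) by simp
    then show ?thesis using False assms(1) by simp
  qed
  then show "3 * 2 ^ h \<le> x + 2" and "x < 6 * 2 ^ h" by blast+
qed

lemma arboricity_edge_coloring_colors:
  assumes "simple_graph V E" "1 / real (arboricity V E) \<le> \<epsilon>"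
    and "h = nat (max \<lfloor>log 2 (\<epsilon> * real (arboricity V E) / 3)\<rfloor> 0)"
    and "arboricity_edge_coloring Bnd cs co V E h \<phi> t"
  shows "\<exists>k. real k \<le> real (max_degree V E) + \<epsilon> * real (arboricity V E) \<and>
           proper_edge_coloring E \<phi> k"
proof (cases "E = {}")
  case True
  then have "arboricity V E = 0" using arboricity_le_card_edges[OF assms(1)] by simp
  moreover have "proper_edge_coloring E \<phi> 0" using True by (simp add: proper_edge_coloring_def)
  ultimately show ?thesis by (intro exI[of _ 0]) simp
next
  case False
  obtain D p t' where "forests_decomposition_orientation V E D"
    and coloring: "oriented_edge_coloring Bnd cs V E D h \<phi> p t'"
    using assms(4) unfolding arboricity_edge_coloring_def by blast
  then obtain r :: "'a \<Rightarrow> nat" where "orientation E D"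
    using forests_decomposition_orientationE[OF assms(1)] by metis
  have "1 \<le> real (arboricity V E)" using arboricity_pos[OF assms(1) False] by simp
  then have "1 \<le> \<epsilon> * real (arboricity V E)" using assms(2) by (simp add: divide_le_eq mult.commute)
  then have "3 * 2 ^ h \<le> \<epsilon> * real (arboricity V E) + 2"
    using recursion_depth_bounds(1) assms(3) by blast
  moreover have "p + 2 \<le> max_degree V E + 3 * 2 ^ h"
    using oriented_edge_coloring_palette[OF coloring assms(1) \<open>orientation E D\<close>] .
  then have "real p + 2 \<le> real (max_degree V E) + 3 * 2 ^ h"
    by (metis (mono_tags) of_nat_le_iff of_nat_add of_nat_mult of_nat_numeral of_nat_power)
  ultimately show ?thesis
    using oriented_edge_coloring_proper[OF coloring] by (intro exI[of _ p]) simp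
qed

lemma recursion_depth_le_log:
  assumes "simple_graph V E" "(2::real) ^ h \<le> real (card E)"
  shows "real h \<le> 2 * log 2 (real (card V))"
proof -
  have "real (card E) \<le> real (card V) ^ 2"
    using card_edges_le_square[OF assms(1)] by (metis of_nat_le_iff of_nat_power)
  with assms(2) have "(2::real) ^ h \<le> real (card V) ^ 2" by linarith
  moreover have "(1::real) \<le> 2 ^ h" by simp
  ultimately have "0 < real (card V)" by (cases "card V = 0") auto
  have "real h = log 2 (2 ^ h)" by (simp add: log_nat_power)
  also have "\<dots> \<le> log 2 (real (card V) ^ 2)"
    using \<open>(2::real) ^ h \<le> real (card V) ^ 2\<close> \<open>0 < real (card V)\<close>
    by (subst log_le_cancel_iff) auto
  also have "\<dots> = 2 * log 2 (real (card V))" using \<open>0 < real (card V)\<close> by (simp add: log_nat_power)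
  finally show ?thesis .
qed

lemma outdeg_bound_at_depth_le:
  fixes \<alpha> \<epsilon> :: real
  assumes "1 \<le> \<alpha>" "0 < \<epsilon>" "\<epsilon> < 1" "\<epsilon> * \<alpha> < 6 * 2 ^ h"
  shows "1 + (2 * \<alpha> - 1) / 2 ^ h \<le> 13 / \<epsilon>"
proof -
  have "(2 * \<alpha> - 1) / 2 ^ h \<le> 2 * \<alpha> / 2 ^ h" by (simp add: divide_right_mono)
  also have "\<dots> \<le> 2 * \<alpha> / (\<epsilon> * \<alpha> / 6)"
    using assms by (intro divide_left_mono) (auto simp: field_simps)
  also have "\<dots> = 12 / \<epsilon>" using assms(1,2) by (simp add: field_simps)
  finally have "(2 * \<alpha> - 1) / 2 ^ h \<le> 12 / \<epsilon>" .
  moreover have "1 \<le> 1 / \<epsilon>" using assms(2,3) by simp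
  moreover have "13 / \<epsilon> = 1 / \<epsilon> + 12 / \<epsilon>" by (simp add: add_divide_distrib[symmetric])
  ultimately show ?thesis by linarith
qed

lemma two_le_card_vertices:
  assumes "simple_graph V E" "E \<noteq> {}"
  shows "2 \<le> card V"
proof -
  obtain e where "e \<in> E" using assms(2) by blast
  then have "e \<subseteq> V" "card e = 2" using simple_graph_edge[OF assms(1)] by auto
  moreover have "finite V" using assms(1) by (simp add: simple_graph_def)
  ultimately show ?thesis using card_mono by metis
qed

lemma arboricity_edge_coloring_time_le:
  fixes K :: real
  assumes "simple_graph V E" "arboricity_edge_coloring Bnd cs co V E h \<phi> t"
    and "0 \<le> K" "\<And>m a. Bnd (card V) m a \<le> K * real m * real a ^ q"
  shows "t \<le> K * real (card E) * (1 + (2 * real (arboricity V E) - 1) / 2 ^ h) ^ q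
           + \<bar>cs\<bar> * real h * real (card E) + co * real (card E)"
proof -
  obtain D p t' where "forests_decomposition_orientation V E D"
    and coloring: "oriented_edge_coloring Bnd cs V E D h \<phi> p t'"
    and "t \<le> t' + co * real (card E)"
    using assms(2) unfolding arboricity_edge_coloring_def by blast
  moreover obtain r :: "'a \<Rightarrow> nat" where "\<forall>(u, w)\<in>D. r u < r w" "orientation E D"
    and outdeg: "\<And>v. v \<in> V \<Longrightarrow> outdeg_in D E v \<le> 2 * arboricity V E"
    using forests_decomposition_orientationE[OF assms(1) \<open>forests_decomposition_orientation V E D\<close>]
    by metis
  moreover have "real (outdeg_in D E v) \<le> 2 * real (arboricity V E)" if "v \<in> V" for v
    using outdeg[OF that] by (metis of_nat_le_iff of_nat_mult of_nat_numeral)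
  ultimately show ?thesis
    using oriented_edge_coloring_time[OF coloring assms(1), of r "2 * real (arboricity V E)" K q]
      assms(3,4) by fastforce
qed

lemma cost_terms_le:
  fixes t a b c m L h Z \<epsilon> :: real
  assumes "t \<le> a * L * m * Z ^ q + b * h * m + c * m"
    and "0 \<le> a" "0 \<le> b" "0 \<le> m" "1 \<le> L" "0 < \<epsilon>" "\<epsilon> < 1"
    and "0 \<le> Z" "Z \<le> 13 / \<epsilon>" "h \<le> 2 * L"
  shows "t \<le> (a * 13 ^ q + 2 * b + \<bar>c\<bar>) * m * L / \<epsilon> ^ q"
proof -
  define w where "w = 1 / \<epsilon> ^ q"
  have "1 \<le> w" unfolding w_def using assms(6,7) by (simp add: power_le_one)
  have "Z ^ q \<le> (13 / \<epsilon>) ^ q" using assms(8,9) by (rule power_mono[rotated])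
  then have "Z ^ q \<le> 13 ^ q * w" unfolding w_def by (simp add: power_divide)
  then have "a * L * m * Z ^ q \<le> a * L * m * (13 ^ q * w)"
    by (rule mult_left_mono) (use assms(2,4,5) in simp)
  moreover have "b * h * m \<le> b * (2 * L * w) * m"
  proof -
    have "2 * L \<le> 2 * L * w" using assms(5) \<open>1 \<le> w\<close> by (simp add: mult_le_cancel_left1)
    then show ?thesis using assms(3,4,10) by (intro mult_right_mono mult_left_mono) auto
  qed
  moreover have "c * m \<le> \<bar>c\<bar> * m * (L * w)"
  proof -
    have "1 \<le> L * w" using assms(5) \<open>1 \<le> w\<close> by (metis mult_mono' mult_1 zero_le_one)
    then have "\<bar>c\<bar> * m * 1 \<le> \<bar>c\<bar> * m * (L * w)" using assms(4) by (intro mult_left_mono) auto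
    moreover have "c * m \<le> \<bar>c\<bar> * m" using assms(4) by (simp add: mult_right_mono)
    ultimately show ?thesis by simp
  qed
  ultimately have "t \<le> a * L * m * (13 ^ q * w) + b * (2 * L * w) * m + \<bar>c\<bar> * m * (L * w)"
    using assms(1) by linarith
  also have "\<dots> = (a * 13 ^ q + 2 * b + \<bar>c\<bar>) * m * L / \<epsilon> ^ q"
    unfolding w_def by (simp add: add_divide_distrib algebra_simps)
  finally show ?thesis .
qed

lemma arboricity_edge_coloring_time:
  fixes q :: nat
  assumes "simple_graph V E" "1 / real (arboricity V E) \<le> \<epsilon>" "\<epsilon> < 1"
    and "h = nat (max \<lfloor>log 2 (\<epsilon> * real (arboricity V E) / 3)\<rfloor> 0)"
    and "arboricity_edge_coloring (\<lambda>n' m' a'. cb * real m' * real a' ^ q * log 2 (real n'))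
           cs co V E h \<phi> t"
  shows "t \<le> (\<bar>cb\<bar> * 13 ^ q + 2 * \<bar>cs\<bar> + \<bar>co\<bar>) * real (card E) * log 2 (real (card V)) / \<epsilon> ^ q"
proof -
  define \<alpha> m L where "\<alpha> = real (arboricity V E)" and "m = real (card E)"
    and "L = log 2 (real (card V))"
  have "cb * real m' * real a ^ q * L \<le> \<bar>cb\<bar> * \<bar>L\<bar> * real m' * real a ^ q" for m' a
    using abs_ge_self[of "cb * real m' * real a ^ q * L"] by (simp add: abs_mult mult_ac)
  then have t_le: "t \<le> \<bar>cb\<bar> * \<bar>L\<bar> * m * (1 + (2 * \<alpha> - 1) / 2 ^ h) ^ q + \<bar>cs\<bar> * real h * m + co * m"
    unfolding \<alpha>_def m_def L_def by (intro arboricity_edge_coloring_time_le[OF assms(1,5)]) auto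
  show ?thesis
  proof (cases "E = {}")
    case True
    then show ?thesis using t_le unfolding m_def by simp
  next
    case False
    have "1 \<le> L" using two_le_card_vertices[OF assms(1) False] unfolding L_def by simp
    have "1 \<le> \<alpha>" using arboricity_pos[OF assms(1) False] unfolding \<alpha>_def by simp
    then have "1 \<le> \<epsilon> * \<alpha>" using assms(2) unfolding \<alpha>_def by (simp add: divide_le_eq mult.commute)
    then have "0 < \<epsilon>" using \<open>1 \<le> \<alpha>\<close> by (intro zero_less_mult_pos2[of \<epsilon> \<alpha>]) simp_all
    note depth = recursion_depth_bounds[OF _ assms(4), folded \<alpha>_def, OF \<open>1 \<le> \<epsilon> * \<alpha>\<close>]
    have "\<epsilon> * \<alpha> \<le> \<alpha>" using \<open>0 < \<epsilon>\<close> \<open>\<epsilon> < 1\<close> \<open>1 \<le> \<alpha>\<close> by (simp add: mult_left_le_one_le)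
    moreover have "\<alpha> \<le> m" using arboricity_le_card_edges[OF assms(1)] unfolding \<alpha>_def m_def by simp
    ultimately have "(2::real) ^ h \<le> m" using depth(1) \<open>1 \<le> \<alpha>\<close> by linarith
    then have "real h \<le> 2 * L" unfolding L_def m_def by (rule recursion_depth_le_log[OF assms(1)])
    moreover have "1 + (2 * \<alpha> - 1) / 2 ^ h \<le> 13 / \<epsilon>"
      using outdeg_bound_at_depth_le[OF \<open>1 \<le> \<alpha>\<close> \<open>0 < \<epsilon>\<close> assms(3) depth(2)] .
    ultimately show ?thesis
      using t_le \<open>1 \<le> L\<close> \<open>0 < \<epsilon>\<close> assms(3) \<open>1 \<le> \<alpha>\<close> unfolding m_def L_def
      by (intro cost_terms_le) auto
  qed
qed

theorem theorem4p16:
  shows "\<forall>cb cs co :: real.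
    (\<exists>C. \<forall>(V :: nat set) E (\<epsilon> :: real) h \<phi> t.
        simple_graph V E \<longrightarrow>
        1 / real (arboricity V E) \<le> \<epsilon> \<longrightarrow> \<epsilon> < 1 \<longrightarrow>
        h = nat (max \<lfloor>log 2 (\<epsilon> * real (arboricity V E) / 3)\<rfloor> 0) \<longrightarrow>
        arboricity_edge_coloring
          (\<lambda>n' m' a'. cb * real m' * real a' ^ 7 * log 2 (real n')) cs co V E h \<phi> t \<longrightarrow>
        (\<exists>k. real k \<le> real (max_degree V E) + \<epsilon> * real (arboricity V E) \<and>
             proper_edge_coloring E \<phi> k) \<and>
        t \<le> C * real (card E) * log 2 (real (card V)) / \<epsilon> ^ 7)
  \<and> (\<exists>C. \<forall>(V :: nat set) E (\<epsilon> :: real) h \<phi> t.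
        simple_graph V E \<longrightarrow>
        1 / real (arboricity V E) \<le> \<epsilon> \<longrightarrow> \<epsilon> < 1 \<longrightarrow>
        h = nat (max \<lfloor>log 2 (\<epsilon> * real (arboricity V E) / 3)\<rfloor> 0) \<longrightarrow>
        arboricity_edge_coloring
          (\<lambda>n' m' a'. cb * real m' * real a' * log 2 (real n')) cs co V E h \<phi> t \<longrightarrow>
        (\<exists>k. real k \<le> real (max_degree V E) + \<epsilon> * real (arboricity V E) \<and>
             proper_edge_coloring E \<phi> k) \<and>
        t \<le> C * real (card E) * log 2 (real (card V)) / \<epsilon>)"
  apply (intro allI conjI; rule exI; intro allI impI conjI)
     apply (erule (3) arboricity_edge_coloring_colors)
    apply (erule (4) arboricity_edge_coloring_time)
   apply (erule (3) arboricity_edge_coloring_colors)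
  apply (erule (4) arboricity_edge_coloring_time[where q = 1, unfolded power_one_right])
  done

end
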